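(* Let $n\ge1$, $m=2^n$, let $\mathcal{B}$ be the boolean algebra of rank $r\ge1$, and let $A\subsetneq\{0,1\}^n$ with $a=|A|$. If $m-a\le r$, then the solution set $Y=V_{\mathcal{B}}(S_A)$ of the orthogonal system $S_A$ is irreducible over $\mathcal{B}$.
   Context: A finite boolean algebra of rank $r$ is (isomorphic to) the power set algebra of an $r$-element set, in the language $\{\vee,\cdot,\bar{\ },0,1\}$. Orthogonal variables: $Z=\{z_\alpha:\alpha\in\{0,1\}^n\}$, $|Z|=m=2^n$. For $A\subseteq\{0,1\}^n$ the orthogonal system is $$S_A=\{z_\alpha=0\mid\alpha\in A\}\cup\{z_\alpha z_\beta=0\mid \alpha\ne\beta\}\cup\{\textstyle\bigvee_{\alpha}z_\alpha=1\}.$$ $V_{\mathcal{B}}(S)\subseteq\mathcal{B}^m$ is the solution set of $S$. A subset of $\mathcal{B}^m$ is algebraic if it is the solution set of some system of equations $t=s$ ($t,s$ terms in $Z$). A nonempty algebraic set is irreducible if it is not a finite union of proper algebraic subsets. *)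

theory Defs
  imports Main "HOL-Library.FuncSet"
begin

datatype 'v bterm = BVar 'v | BJoin "'v bterm" "'v bterm" | BMeet "'v bterm" "'v bterm"
  | BCompl "'v bterm" | BZero | BOne

fun beval :: "'u set \<Rightarrow> ('v \<Rightarrow> 'u set) \<Rightarrow> 'v bterm \<Rightarrow> 'u set" where
  "beval U p (BVar x) = p x"
| "beval U p (BJoin t s) = beval U p t \<union> beval U p s"
| "beval U p (BMeet t s) = beval U p t \<inter> beval U p s"
| "beval U p (BCompl t) = U - beval U p t"
| "beval U p BZero = {}"
| "beval U p BOne = U"

definition bpoints :: "'u set \<Rightarrow> 'v set \<Rightarrow> ('v \<Rightarrow> 'u set) set" where
  "bpoints U X = X \<rightarrow>\<^sub>E Pow U"

definition bsol :: "'u set \<Rightarrow> 'v set \<Rightarrow> ('v bterm \<times> 'v bterm) set \<Rightarrow> ('v \<Rightarrow> 'u set) set" where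
  "bsol U X S = {p \<in> bpoints U X. \<forall>(t, s) \<in> S. beval U p t = beval U p s}"

definition balgebraic :: "'u set \<Rightarrow> 'v set \<Rightarrow> ('v \<Rightarrow> 'u set) set \<Rightarrow> bool" where
  "balgebraic U X Y \<longleftrightarrow> (\<exists>S. (\<forall>(t, s) \<in> S. set_bterm t \<subseteq> X \<and> set_bterm s \<subseteq> X) \<and> Y = bsol U X S)"

definition birreducible :: "'u set \<Rightarrow> 'v set \<Rightarrow> ('v \<Rightarrow> 'u set) set \<Rightarrow> bool" where
  "birreducible U X Y \<longleftrightarrow> Y \<noteq> {} \<and> balgebraic U X Y \<and>
     \<not> (\<exists>F. finite F \<and> (\<forall>Z \<in> F. balgebraic U X Z \<and> Z \<subset> Y) \<and> Y = \<Union>F)"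

(* {0,1}^n as boolean lists of length n *)
definition cube :: "nat \<Rightarrow> bool list set" where
  "cube n = {xs. length xs = n}"

definition bjoin_list :: "'v list \<Rightarrow> 'v bterm" where
  "bjoin_list vs = foldr (\<lambda>v t. BJoin (BVar v) t) vs BZero"

definition orth_system :: "nat \<Rightarrow> bool list set \<Rightarrow> (bool list bterm \<times> bool list bterm) set" where
  "orth_system n A =
     {(BVar \<alpha>, BZero) | \<alpha>. \<alpha> \<in> A}
   \<union> {(BMeet (BVar \<alpha>) (BVar \<beta>), BZero) | \<alpha> \<beta>. \<alpha> \<in> cube n \<and> \<beta> \<in> cube n \<and> \<alpha> \<noteq> \<beta>}
   \<union> {(bjoin_list (List.n_lists n [False, True]), BOne)}"

end

theory Submission
  imports Defs
begin

text \<open>A solution of \<open>S\<^sub>A\<close> is a partition of \<open>U\<close> indexed by the cube whose blocks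
  outside \<open>A\<close> may be nonempty. Membership of an element \<open>u\<close> in the value of a term depends
  only on the block containing \<open>u\<close>. Since \<open>m - |A| \<le> r\<close>, there is a solution \<open>p\<close> all of
  whose blocks outside \<open>A\<close> are nonempty; every element of any solution \<open>q\<close> then has a
  "twin" in \<open>p\<close> lying in the same block, so every equation satisfied by \<open>p\<close> is
  satisfied by \<open>q\<close>. Hence \<open>p\<close> is a generic point: each algebraic set containing \<open>p\<close>
  contains the whole solution set, which therefore cannot be a finite union of proper
  algebraic subsets.\<close>

definition bpartition :: "'u set \<Rightarrow> 'v set \<Rightarrow> ('v \<Rightarrow> 'u set) \<Rightarrow> bool" where
  "bpartition U X q \<longleftrightarrow> q \<in> bpoints U X \<and>
     (\<forall>\<alpha>\<in>X. \<forall>\<beta>\<in>X. \<alpha> \<noteq> \<beta> \<longrightarrow> q \<alpha> \<inter> q \<beta> = {}) \<and> (\<Union>\<alpha>\<in>X. q \<alpha>) = U"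

lemma beval_bjoin_list: "beval U q (bjoin_list vs) = (\<Union>v\<in>set vs. q v)"
  by (induction vs) (auto simp: bjoin_list_def)

lemma set_bterm_bjoin_list: "set_bterm (bjoin_list vs) = set vs"
  by (induction vs) (auto simp: bjoin_list_def)

lemma set_n_lists_bool: "set (List.n_lists n [False, True]) = cube n"
  by (auto simp: set_n_lists cube_def)

lemma finite_cube: "finite (cube n)"
  using finite_lists_length_eq[of "UNIV :: bool set" n] by (simp add: cube_def)

lemma card_cube: "card (cube n) = 2 ^ n"
  using card_lists_length_eq[of "UNIV :: bool set" n] by (simp add: cube_def)

lemma mem_bsol_orth_system_iff:
  "q \<in> bsol U (cube n) (orth_system n A) \<longleftrightarrow>
     bpartition U (cube n) q \<and> (\<forall>\<alpha>\<in>A. q \<alpha> = {})"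
proof -
  have vars: "{(BVar \<alpha>, BZero) | \<alpha>. \<alpha> \<in> A} = (\<lambda>\<alpha>. (BVar \<alpha>, BZero)) ` A"
    by auto
  have meets: "{(BMeet (BVar \<alpha>) (BVar \<beta>), BZero) | \<alpha> \<beta>. \<alpha> \<in> cube n \<and> \<beta> \<in> cube n \<and> \<alpha> \<noteq> \<beta>}
      = (\<lambda>(\<alpha>, \<beta>). (BMeet (BVar \<alpha>) (BVar \<beta>), BZero)) `
          {(\<alpha>, \<beta>). \<alpha> \<in> cube n \<and> \<beta> \<in> cube n \<and> \<alpha> \<noteq> \<beta>}"
    by auto
  show ?thesis
    unfolding bsol_def bpartition_def orth_system_def ball_Un vars meets
    by (auto simp: beval_bjoin_list set_n_lists_bool)
qed

lemma balgebraic_bsol_orth_system: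
  assumes "A \<subseteq> cube n"
  shows "balgebraic U (cube n) (bsol U (cube n) (orth_system n A))"
  unfolding balgebraic_def
  by (intro exI[of _ "orth_system n A"])
    (use assms in \<open>auto simp: orth_system_def set_bterm_bjoin_list set_n_lists_bool\<close>)

lemma beval_subset:
  "set_bterm t \<subseteq> X \<Longrightarrow> q \<in> bpoints U X \<Longrightarrow> beval U q t \<subseteq> U"
  by (induction t) (auto simp: bpoints_def)

lemma mem_beval_transfer:
  assumes "set_bterm t \<subseteq> X" and "\<forall>x\<in>X. u \<in> q x \<longleftrightarrow> u' \<in> p x"
    and "u \<in> U" and "u' \<in> U"
  shows "u \<in> beval U q t \<longleftrightarrow> u' \<in> beval U p t"
  using assms by (induction t) auto

lemma bpartition_mem_iff:
  assumes "bpartition U X q" and "\<alpha> \<in> X" and "u \<in> q \<alpha>" and "x \<in> X"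
  shows "u \<in> q x \<longleftrightarrow> x = \<alpha>"
  using assms unfolding bpartition_def by blast

lemma bsol_transfer_bpartition:
  assumes p: "bpartition U X p" and q: "bpartition U X q"
    and blocks: "\<forall>\<alpha>\<in>X. q \<alpha> \<noteq> {} \<longrightarrow> p \<alpha> \<noteq> {}"
    and vars: "\<forall>(t, s) \<in> S. set_bterm t \<subseteq> X \<and> set_bterm s \<subseteq> X"
    and "p \<in> bsol U X S"
  shows "q \<in> bsol U X S"
proof -
  have q_point: "q \<in> bpoints U X"
    using q by (simp add: bpartition_def)
  have "beval U q t = beval U q s" if ts: "(t, s) \<in> S" for t s
  proof -
    have tX: "set_bterm t \<subseteq> X" and sX: "set_bterm s \<subseteq> X"
      using vars ts by auto
    have p_eq: "beval U p t = beval U p s"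
      using \<open>p \<in> bsol U X S\<close> ts by (auto simp: bsol_def)
    have "u \<in> beval U q t \<longleftrightarrow> u \<in> beval U q s" if "u \<in> U" for u
    proof -
      obtain \<alpha> where \<alpha>: "\<alpha> \<in> X" "u \<in> q \<alpha>"
        using q \<open>u \<in> U\<close> by (auto simp: bpartition_def)
      then obtain u' where u': "u' \<in> p \<alpha>"
        using blocks by blast
      have "u' \<in> U"
        using p \<alpha>(1) u' by (auto simp: bpartition_def)
      have twin: "\<forall>x\<in>X. u \<in> q x \<longleftrightarrow> u' \<in> p x"
        using bpartition_mem_iff[OF q \<alpha>] bpartition_mem_iff[OF p \<alpha>(1) u'] by simp
      have "u \<in> beval U q t \<longleftrightarrow> u' \<in> beval U p t"
        by (rule mem_beval_transfer[OF tX twin \<open>u \<in> U\<close> \<open>u' \<in> U\<close>])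
      also have "\<dots> \<longleftrightarrow> u' \<in> beval U p s"
        by (simp only: p_eq)
      also have "\<dots> \<longleftrightarrow> u \<in> beval U q s"
        by (rule mem_beval_transfer[OF sX twin \<open>u \<in> U\<close> \<open>u' \<in> U\<close>, symmetric])
      finally show ?thesis .
    qed
    moreover have "beval U q t \<subseteq> U" and "beval U q s \<subseteq> U"
      using beval_subset[OF tX q_point] beval_subset[OF sX q_point] .
    ultimately show ?thesis
      by blast
  qed
  with q_point show ?thesis
    by (auto simp: bsol_def)
qed

lemma exists_bpartition_blocks:
  assumes "C \<subseteq> X" and "C \<noteq> {}" and "finite U" and "finite C" and "card C \<le> card U"
  shows "\<exists>p. bpartition U X p \<and> (\<forall>\<alpha>\<in>X. p \<alpha> \<noteq> {} \<longleftrightarrow> \<alpha> \<in> C)"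
proof -
  obtain f where f: "inj_on f C" "f ` C \<subseteq> U"
    using card_le_inj assms(3-5) by blast
  obtain c where c: "c \<in> C"
    using assms(2) by blast
  define g where "g u = (if u \<in> f ` C then inv_into C f u else c)" for u
  have g_in: "g u \<in> C" for u
    using c by (auto simp: g_def inv_into_into)
  have g_f: "g (f \<alpha>) = \<alpha>" if "\<alpha> \<in> C" for \<alpha>
    using f(1) that by (simp add: g_def)
  define p where "p \<alpha> = (if \<alpha> \<in> X then {u \<in> U. g u = \<alpha>} else undefined)" for \<alpha>
  have "bpartition U X p"
    using g_in assms(1) by (auto simp: bpartition_def bpoints_def p_def)
  moreover have "p \<alpha> \<noteq> {} \<longleftrightarrow> \<alpha> \<in> C" if "\<alpha> \<in> X" for \<alpha>
    using that g_in g_f f(2) by (auto simp: p_def intro!: exI[of _ "f \<alpha>"])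
  ultimately show ?thesis
    by blast
qed

lemma birreducible_if_generic_point:
  assumes "balgebraic U X Y" and "p \<in> Y"
    and generic: "\<And>Z. balgebraic U X Z \<Longrightarrow> p \<in> Z \<Longrightarrow> Y \<subseteq> Z"
  shows "birreducible U X Y"
  unfolding birreducible_def
proof (intro conjI notI)
  show "Y = {} \<Longrightarrow> False" and "balgebraic U X Y"
    using assms(1,2) by auto
  assume "\<exists>F. finite F \<and> (\<forall>Z\<in>F. balgebraic U X Z \<and> Z \<subset> Y) \<and> Y = \<Union>F"
  then obtain F where F: "\<forall>Z\<in>F. balgebraic U X Z \<and> Z \<subset> Y" "Y = \<Union>F"
    by blast
  then obtain Z where "Z \<in> F" "p \<in> Z"
    using \<open>p \<in> Y\<close> by blast
  with F(1) generic show False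
    by blast
qed

theorem lemma1:
  fixes U :: "'u set" and n r :: nat and A :: "bool list set"
  assumes "n \<ge> 1"
    and "finite U" and "card U = r" and "r \<ge> 1"
    and "A \<subset> cube n"
    and "2 ^ n - card A \<le> r"
  shows "birreducible U (cube n) (bsol U (cube n) (orth_system n A))"
proof -
  let ?Y = "bsol U (cube n) (orth_system n A)"
  have "finite A"
    using assms(5) finite_cube by (meson finite_subset psubset_imp_subset)
  then have "card (cube n - A) = 2 ^ n - card A"
    using assms(5) by (simp add: card_Diff_subset card_cube)
  then obtain p where p: "bpartition U (cube n) p"
    and p_blocks: "\<forall>\<alpha>\<in>cube n. p \<alpha> \<noteq> {} \<longleftrightarrow> \<alpha> \<notin> A"
    using exists_bpartition_blocks[of "cube n - A" "cube n" U] assms(2,3,5,6) finite_cube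
    by auto
  have "p \<in> ?Y"
    using p p_blocks assms(5) by (auto simp: mem_bsol_orth_system_iff)
  moreover have "?Y \<subseteq> Z" if "balgebraic U (cube n) Z" and "p \<in> Z" for Z
  proof
    obtain S where S: "\<forall>(t, s) \<in> S. set_bterm t \<subseteq> cube n \<and> set_bterm s \<subseteq> cube n"
      and Z: "Z = bsol U (cube n) S"
      using \<open>balgebraic U (cube n) Z\<close> by (auto simp: balgebraic_def)
    fix q assume "q \<in> ?Y"
    then have q: "bpartition U (cube n) q" and "\<forall>\<alpha>\<in>A. q \<alpha> = {}"
      by (simp_all add: mem_bsol_orth_system_iff)
    then have "\<forall>\<alpha>\<in>cube n. q \<alpha> \<noteq> {} \<longrightarrow> p \<alpha> \<noteq> {}"
      using p_blocks by blast
    from bsol_transfer_bpartition[OF p q this S] \<open>p \<in> Z\<close> show "q \<in> Z"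
      by (simp add: Z)
  qed
  moreover have "balgebraic U (cube n) ?Y"
    using assms(5) by (simp add: balgebraic_bsol_orth_system)
  ultimately show ?thesis
    by (rule birreducible_if_generic_point[rotated])
qed

end
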